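(* Let $n\ge2$ and $H_{n-1}=\{x\in\mathbb{R}^{n-1}:|x_1|+\dots+|x_{n-1}|+|x_1+\dots+x_{n-1}|\le1\}$. For generic $y\in\mathbb{R}^{n-1}$ (all $y_j$ nonzero and pairwise distinct), $\widehat{\chi_{H_{n-1}}}(y)$ equals \[ \frac{(-1)^{(n-1)/2}}{2^{n-2}\pi^{n-1}}\Bigg[-\sum_{1\le j<k\le n-1}\frac{(y_j-y_k)^{n-3}\cos(\pi(y_j-y_k))}{y_jy_k\prod_{i\ne j,k}(y_j-y_i)(y_k-y_i)}+\sum_{j=1}^{n-1}\frac{y_j^{n-3}\cos(\pi y_j)}{\prod_{i\ne j}(y_j-y_i)y_i}\Bigg] \] if $n$ is odd, and \[ \frac{(-1)^{n/2-1}}{2^{n-2}\pi^{n-1}}\Bigg[\sum_{1\le j<k\le n-1}\frac{(y_j-y_k)^{n-3}\sin(\pi(y_j-y_k))}{y_jy_k\prod_{i\ne j,k}(y_j-y_i)(y_k-y_i)}+\sum_{j=1}^{n-1}\frac{y_j^{n-3}\sin(\pi y_j)}{\prod_{i\ne j}(y_j-y_i)y_i}\Bigg] \] if $n$ is even. Here products over $i$ range over $i\in\{1,\dots,n-1\}$ with the indicated exclusions, and $\prod_{i\ne j}(y_j-y_i)y_i$ denotes $\prod_{i\ne j}\big((y_j-y_i)y_i\big)$.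
   Context: $\chi_S$ denotes the indicator function of a set $S$ and $\widehat f(y)=\int_{\mathbb{R}^{n-1}} f(x)e^{-2\pi i\langle x,y\rangle}dx$. *)

theory Defs
  imports "HOL-Analysis.Analysis"
begin

text \<open>Points of R^d are functions nat => real restricted to coordinates 1..d;
  Lebesgue measure on R^d is the product measure of lborel over the index set {1..d}.\<close>

definition H_set :: "nat \<Rightarrow> (nat \<Rightarrow> real) set" where
  "H_set d = {x. (\<Sum>i=1..d. \<bar>x i\<bar>) + \<bar>\<Sum>i=1..d. x i\<bar> \<le> 1}"

definition fourier_hat :: "nat \<Rightarrow> ((nat \<Rightarrow> real) \<Rightarrow> real) \<Rightarrow> (nat \<Rightarrow> real) \<Rightarrow> complex" where
  "fourier_hat d f y =
     (LINT x | PiM {1..d} (\<lambda>_. lborel).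
        complex_of_real (f x) * exp (- (2 * of_real pi * \<i> * complex_of_real (\<Sum>i=1..d. x i * y i))))"

end

theory Submission
  imports Defs
begin

text \<open>
  For \<open>a, b \<ge> 0\<close> let \<open>H_region m a b\<close> be the set of \<open>x \<in> \<real>\<^sup>m\<close> with
  \<open>\<Sum>|x i| + |a - b + \<Sum>x i| \<le> a + b\<close>, so that \<open>H\<^sub>m = H_region m (1/2) (1/2)\<close>, and let
  \<open>F m a b\<close> be the Fourier transform of its indicator at \<open>y\<close>. The slice of \<open>H_region (m+1) a b\<close>
  at last coordinate \<open>t\<close> is \<open>H_region m (a - max 0 (-t)) (b - max 0 t)\<close>, so Fubini gives a
  recursion for \<open>F\<close> in \<open>m\<close>. With nodes \<open>w 0 = 0\<close>, \<open>w i = 2\<pi>\<i> y i\<close> and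
  \<open>p j = \<Prod>i\<noteq>j. w j - w i\<close>, it is solved by
  \<open>F m a b = \<Sum>j k. (w j - w k)^m exp (w k a - w j b) / (p j p k)\<close>:
  integrating the exponentials of the closed form for \<open>m\<close> produces boundary terms, and those
  not belonging to the closed form for \<open>m+1\<close> cancel because divided differences of
  polynomials of degree below the number of nodes vanish. At \<open>a = b = 1/2\<close> the double sum
  is invariant under swapping \<open>j\<close> and \<open>k\<close> up to the sign \<open>(-1)^m\<close>, so only its cosine part
  (\<open>m\<close> even) or its sine part (\<open>m\<close> odd) survives; separating the terms with \<open>j = 0\<close> gives
  the stated formula.
\<close>

definition node_prod :: "nat set \<Rightarrow> (nat \<Rightarrow> 'a::field) \<Rightarrow> nat \<Rightarrow> 'a" where
  "node_prod A W j = (\<Prod>i\<in>A - {j}. W j - W i)"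

definition divdiff :: "nat set \<Rightarrow> (nat \<Rightarrow> 'a::field) \<Rightarrow> ('a \<Rightarrow> 'a) \<Rightarrow> 'a" where
  "divdiff A W f = (\<Sum>j\<in>A. f (W j) / node_prod A W j)"

lemma divdiff_add: "divdiff A W (\<lambda>z. f z + g z) = divdiff A W f + divdiff A W g"
  unfolding divdiff_def by (simp add: add_divide_distrib sum.distrib)

lemma divdiff_cmult: "divdiff A W (\<lambda>z. c * f z) = c * divdiff A W f"
  unfolding divdiff_def by (simp add: sum_distrib_left mult.assoc)

lemma node_prod_nonzero: "finite A \<Longrightarrow> inj_on W A \<Longrightarrow> j \<in> A \<Longrightarrow> node_prod A W j \<noteq> 0"
  unfolding node_prod_def by (auto simp: inj_on_def)

lemma node_prod_remove:
  assumes "finite A" "a \<in> A" "j \<noteq> a"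
  shows "node_prod A W j = (W j - W a) * node_prod (A - {a}) W j"
proof -
  have "A - {j} = insert a (A - {a} - {j})" using assms by auto
  then show ?thesis unfolding node_prod_def using assms by simp
qed

lemma divdiff_mult_linear:
  assumes A: "finite A" and inj: "inj_on W A" and a: "a \<in> A"
  shows "divdiff A W (\<lambda>z. (z - W a) * g z) = divdiff (A - {a}) W g"
proof -
  have "divdiff A W (\<lambda>z. (z - W a) * g z) = (\<Sum>j\<in>A - {a}. (W j - W a) * g (W j) / node_prod A W j)"
    unfolding divdiff_def using A a by (simp add: sum.remove)
  also have "\<dots> = (\<Sum>j\<in>A - {a}. g (W j) / node_prod (A - {a}) W j)"
  proof (intro sum.cong refl)
    fix j assume j: "j \<in> A - {a}"
    then have "W j - W a \<noteq> 0" using inj a by (auto simp: inj_on_def)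
    then show "(W j - W a) * g (W j) / node_prod A W j = g (W j) / node_prod (A - {a}) W j"
      using node_prod_remove[OF A a, of j W] j by simp
  qed
  finally show ?thesis unfolding divdiff_def .
qed

lemma divdiff_const_eq_0:
  assumes "finite A" "inj_on W A" "card A \<ge> 2"
  shows "divdiff A W (\<lambda>_. 1) = 0"
  using assms
proof (induction "card A" arbitrary: A rule: less_induct)
  case less
  then obtain a b where ab: "a \<in> A" "b \<in> A" "a \<noteq> b"
    by (metis card_le_Suc0_iff_eq not_less_eq_eq numeral_2_eq_2)
  have drop_b: "divdiff A W (\<lambda>z. (z - W b) * 1) = divdiff (A - {b}) W (\<lambda>_. 1)"
    and drop_a: "divdiff A W (\<lambda>z. (z - W a) * 1) = divdiff (A - {a}) W (\<lambda>_. 1)"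
    using divdiff_mult_linear[of A W b "\<lambda>_. 1"] divdiff_mult_linear[of A W a "\<lambda>_. 1"] less ab
    by auto
  have "divdiff (A - {b}) W (\<lambda>_. 1) = divdiff (A - {a}) W (\<lambda>_. 1)"
  proof (cases "card A = 2")
    case True
    then have "A - {b} = {a}" "A - {a} = {b}" using ab less(2) by (auto simp: card_2_iff)
    then show ?thesis by (simp add: divdiff_def node_prod_def)
  next
    case False
    then have "divdiff (A - {b}) W (\<lambda>_. 1) = 0" "divdiff (A - {a}) W (\<lambda>_. 1) = 0"
      using less ab by (auto intro!: less(1) simp: inj_on_diff)
    then show ?thesis by simp
  qed
  moreover have "divdiff A W (\<lambda>z. (z - W b) * 1) - divdiff A W (\<lambda>z. (z - W a) * 1)
      = (W a - W b) * divdiff A W (\<lambda>_. 1)"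
    unfolding divdiff_def
    by (simp add: sum_subtractf[symmetric] diff_divide_distrib[symmetric] sum_distrib_left)
  moreover have "W a \<noteq> W b" using ab less(3) by (auto simp: inj_on_def)
  ultimately show ?case using drop_a drop_b by simp
qed

lemma divdiff_power_eq_0:
  assumes "finite A" "inj_on W A" "d + 2 \<le> card A"
  shows "divdiff A W (\<lambda>z. (z - c) ^ d) = 0"
  using assms
proof (induction d arbitrary: A)
  case 0
  then show ?case using divdiff_const_eq_0[of A W] by simp
next
  case (Suc d)
  then obtain a where a: "a \<in> A" by fastforce
  have "divdiff A W (\<lambda>z. (z - c) ^ Suc d)
      = divdiff A W (\<lambda>z. (z - W a) * (z - c) ^ d + (W a - c) * (z - c) ^ d)"
    by (simp add: algebra_simps)
  also have "\<dots> = divdiff (A - {a}) W (\<lambda>z. (z - c) ^ d) + (W a - c) * divdiff A W (\<lambda>z. (z - c) ^ d)"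
    unfolding divdiff_add divdiff_cmult using divdiff_mult_linear[OF Suc(2,3) a] by simp
  also have "divdiff (A - {a}) W (\<lambda>z. (z - c) ^ d) = 0"
    using Suc a by (intro Suc.IH) (auto simp: inj_on_diff)
  also have "divdiff A W (\<lambda>z. (z - c) ^ d) = 0"
    using Suc by (intro Suc.IH) auto
  finally show ?case by simp
qed

lemma sum_power_div_node_prod_insert:
  assumes A: "finite A" and s: "s \<notin> A" and inj: "inj_on W (insert s A)" and d: "d + 1 \<le> card A"
  shows "(\<Sum>j\<in>A. (W j - c) ^ d / (node_prod A W j * (W j - W s)))
    = - ((W s - c) ^ d / node_prod (insert s A) W s)"
proof -
  have "divdiff (insert s A) W (\<lambda>z. (z - c) ^ d) = 0"
    using A s inj d by (intro divdiff_power_eq_0) auto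
  moreover have "node_prod (insert s A) W j = node_prod A W j * (W j - W s)" if "j \<in> A" for j
    using node_prod_remove[of "insert s A" s j W] that A s by (auto simp: mult.commute)
  ultimately show ?thesis
    unfolding divdiff_def using A s by (simp add: eq_neg_iff_add_eq_0 add.commute)
qed

definition fourier_closed_form :: "nat \<Rightarrow> (nat \<Rightarrow> complex) \<Rightarrow> real \<Rightarrow> real \<Rightarrow> complex" where
  "fourier_closed_form m W a b = (\<Sum>j\<in>{0..m}. \<Sum>k\<in>{0..m}.
     (W j - W k) ^ m / (node_prod {0..m} W j * node_prod {0..m} W k) * exp (W k * a - W j * b))"

lemma sum_square_insert:
  assumes "finite A" "s \<notin> A"
  shows "(\<Sum>j\<in>insert s A. \<Sum>k\<in>insert s A. f j k)
    = (\<Sum>j\<in>A. \<Sum>k\<in>A. f j k) + (\<Sum>j\<in>A. f j s) + (\<Sum>k\<in>A. f s k) + f s s"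
  using assms by (simp add: sum.distrib algebra_simps)

context
  fixes m :: nat and W :: "nat \<Rightarrow> complex" and a b :: real
  assumes inj: "inj_on W {0..Suc m}"
begin

private abbreviation (input) "w \<equiv> W (Suc m)"
private abbreviation (input) "p j \<equiv> node_prod {0..m} W j"
private abbreviation (input) "q \<equiv> node_prod {0..Suc m} W (Suc m)"
private abbreviation (input) "C j k \<equiv> (W j - W k) ^ m / (p j * p k)"
private abbreviation (input) "E k j \<equiv> exp (W k * of_real a - W j * of_real b)"

private lemma nodes_ne: "j \<in> {0..m} \<Longrightarrow> W j - w \<noteq> 0"
  using inj_onD[OF inj, of j "Suc m"] by fastforce

private lemma p_ne: "j \<in> {0..m} \<Longrightarrow> p j \<noteq> 0"
  using inj by (intro node_prod_nonzero) (auto intro: inj_on_subset)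

private lemma node_prod_Suc: "j \<in> {0..m} \<Longrightarrow> node_prod {0..Suc m} W j = p j * (W j - w)"
  using node_prod_remove[of "{0..Suc m}" "Suc m" j W] by (auto simp: atLeastAtMostSuc_conv mult.commute)

private lemma q_ne: "q \<noteq> 0"
  using inj by (intro node_prod_nonzero) auto

lemma fourier_closed_form_Suc_split:
  "fourier_closed_form (Suc m) W a b
    = (\<Sum>j\<in>{0..m}. \<Sum>k\<in>{0..m}. C j k * E k j * (1 / (W k - w) - 1 / (W j - w)))
      - (\<Sum>k\<in>{0..m}. E k (Suc m) * (w - W k) ^ m / (q * p k))
      + (\<Sum>j\<in>{0..m}. E (Suc m) j * (W j - w) ^ m / (p j * q))"
proof -
  define T where
    "T j k = (W j - W k) ^ Suc m / (node_prod {0..Suc m} W j * node_prod {0..Suc m} W k) * E k j"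
    for j k
  have "fourier_closed_form (Suc m) W a b = (\<Sum>j\<in>{0..m}. \<Sum>k\<in>{0..m}. T j k) + (\<Sum>j\<in>{0..m}. T j (Suc m))
      + (\<Sum>k\<in>{0..m}. T (Suc m) k) + T (Suc m) (Suc m)"
    unfolding fourier_closed_form_def T_def atLeastAtMostSuc_conv[OF le0]
    by (rule sum_square_insert) auto
  moreover have "T j k = C j k * E k j * (1 / (W k - w) - 1 / (W j - w))"
    if "j \<in> {0..m}" "k \<in> {0..m}" for j k
    unfolding T_def using that p_ne nodes_ne by (simp add: node_prod_Suc field_simps)
  moreover have "T j (Suc m) = E (Suc m) j * (W j - w) ^ m / (p j * q)" if "j \<in> {0..m}" for j
    unfolding T_def using that p_ne nodes_ne q_ne by (simp add: node_prod_Suc field_simps)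
  moreover have "T (Suc m) k = - (E k (Suc m) * (w - W k) ^ m / (q * p k))" if "k \<in> {0..m}" for k
  proof -
    have "W k - w = - (w - W k)" by simp
    then show ?thesis
      unfolding T_def using that p_ne nodes_ne q_ne by (simp add: node_prod_Suc field_simps)
  qed
  ultimately show ?thesis by (simp add: T_def sum_negf)
qed

private lemma sum_power_div_node_prod_Suc:
  "(\<Sum>j\<in>{0..m}. (W j - c) ^ m / (p j * (W j - w))) = - ((w - c) ^ m / q)"
proof -
  have "inj_on W (insert (Suc m) {0..m})"
    using inj by (simp add: atLeastAtMostSuc_conv)
  then show ?thesis
    using sum_power_div_node_prod_insert[of "{0..m}" "Suc m" W m c] by (simp add: atLeastAtMostSuc_conv)
qed

private lemma column_sum:
  "(\<Sum>j\<in>{0..m}. C j k / (W j - w)) = - ((w - W k) ^ m / (q * p k))"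
proof -
  have "(\<Sum>j\<in>{0..m}. C j k / (W j - w)) = (\<Sum>j\<in>{0..m}. (W j - W k) ^ m / (p j * (W j - w))) / p k"
    unfolding sum_divide_distrib by (intro sum.cong refl) (simp add: field_simps)
  then show ?thesis
    unfolding sum_power_div_node_prod_Suc by simp
qed

private lemma row_sum:
  "(\<Sum>k\<in>{0..m}. C j k / (W k - w)) = - ((W j - w) ^ m / (p j * q))"
proof -
  have sign: "(W j - W i) ^ m = (-1) ^ m * (W i - W j) ^ m" for i
    by (metis minus_diff_eq power_minus)
  have "(\<Sum>k\<in>{0..m}. C j k / (W k - w))
      = (-1) ^ m * (\<Sum>k\<in>{0..m}. (W k - W j) ^ m / (p k * (W k - w))) / p j"
    unfolding sum_divide_distrib sum_distrib_left sign by (intro sum.cong refl) (simp add: field_simps)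
  also have "\<dots> = - ((-1) ^ m * (w - W j) ^ m / (p j * q))"
    unfolding sum_power_div_node_prod_Suc by simp
  finally show ?thesis by (simp add: sign)
qed

text \<open>The right-hand side is what one integration step of \<open>fourier_hat_H_region_Suc\<close> produces
  from the closed form in dimension \<open>m\<close>.\<close>

lemma fourier_closed_form_Suc:
  "fourier_closed_form (Suc m) W a b = (\<Sum>j\<in>{0..m}. \<Sum>k\<in>{0..m}. C j k *
     ((E k (Suc m) - E k j) / (W j - w) + (E k j - E (Suc m) j) / (W k - w)))"
proof -
  have "(\<Sum>j\<in>{0..m}. \<Sum>k\<in>{0..m}.
        C j k * ((E k (Suc m) - E k j) / (W j - w) + (E k j - E (Suc m) j) / (W k - w)))
      = (\<Sum>j\<in>{0..m}. \<Sum>k\<in>{0..m}. C j k * E k j * (1 / (W k - w) - 1 / (W j - w)))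
        + (\<Sum>k\<in>{0..m}. E k (Suc m) * (\<Sum>j\<in>{0..m}. C j k / (W j - w)))
        - (\<Sum>j\<in>{0..m}. E (Suc m) j * (\<Sum>k\<in>{0..m}. C j k / (W k - w)))"
  proof -
    have "(\<Sum>j\<in>{0..m}. \<Sum>k\<in>{0..m}.
        C j k * ((E k (Suc m) - E k j) / (W j - w) + (E k j - E (Suc m) j) / (W k - w)))
      = (\<Sum>j\<in>{0..m}. \<Sum>k\<in>{0..m}. C j k * E k j * (1 / (W k - w) - 1 / (W j - w))
          + E k (Suc m) * (C j k / (W j - w)) - E (Suc m) j * (C j k / (W k - w)))"
      by (intro sum.cong refl) (simp add: algebra_simps diff_divide_distrib add_divide_distrib)
    also have "\<dots> = (\<Sum>j\<in>{0..m}. \<Sum>k\<in>{0..m}. C j k * E k j * (1 / (W k - w) - 1 / (W j - w)))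
      + (\<Sum>k\<in>{0..m}. \<Sum>j\<in>{0..m}. E k (Suc m) * (C j k / (W j - w)))
      - (\<Sum>j\<in>{0..m}. \<Sum>k\<in>{0..m}. E (Suc m) j * (C j k / (W k - w)))"
      by (subst (2) sum.swap) (simp add: sum.distrib sum_subtractf)
    finally show ?thesis by (simp only: sum_distrib_left)
  qed
  also have "(\<Sum>k\<in>{0..m}. E k (Suc m) * (\<Sum>j\<in>{0..m}. C j k / (W j - w)))
      = - (\<Sum>k\<in>{0..m}. E k (Suc m) * (w - W k) ^ m / (q * p k))"
    unfolding sum_negf[symmetric] by (intro sum.cong refl) (simp only: column_sum, simp)
  also have "(\<Sum>j\<in>{0..m}. E (Suc m) j * (\<Sum>k\<in>{0..m}. C j k / (W k - w)))
      = - (\<Sum>j\<in>{0..m}. E (Suc m) j * (W j - w) ^ m / (p j * q))"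
    unfolding sum_negf[symmetric] by (intro sum.cong refl) (simp only: row_sum, simp)
  finally show ?thesis
    unfolding fourier_closed_form_Suc_split by simp
qed

end

lemma i_odd_power: "odd n \<Longrightarrow> \<i> ^ n = \<i> * (-1) ^ (n div 2)"
proof -
  assume "odd n"
  then obtain q where "n = Suc (2 * q)" by (metis oddE Suc_eq_plus1)
  then show ?thesis by (simp add: power_mult)
qed

lemma double_sum_swap_eq_scale:
  fixes f :: "'b \<Rightarrow> 'b \<Rightarrow> 'a::semiring_0"
  assumes "\<And>j k. f k j = s * f j k"
  shows "(\<Sum>j\<in>A. \<Sum>k\<in>A. f j k) = s * (\<Sum>j\<in>A. \<Sum>k\<in>A. f j k)"
proof -
  have "(\<Sum>j\<in>A. \<Sum>k\<in>A. f j k) = (\<Sum>k\<in>A. \<Sum>j\<in>A. s * f k j)"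
    by (subst sum.swap) (intro sum.cong refl assms)
  also have "\<dots> = s * (\<Sum>j\<in>A. \<Sum>k\<in>A. f j k)"
    by (simp only: sum_distrib_left)
  finally show ?thesis .
qed

context
  fixes m :: nat and Y :: "nat \<Rightarrow> real"
begin

private abbreviation (input) "W i \<equiv> 2 * of_real pi * \<i> * complex_of_real (Y i)"
private abbreviation (input) "D j k \<equiv> (Y j - Y k) ^ m / (node_prod {0..m} Y j * node_prod {0..m} Y k)"

lemma fourier_closed_form_imaginary_nodes:
  "fourier_closed_form m W (1/2) (1/2) = (\<Sum>j=0..m. \<Sum>k=0..m.
      of_real (D j k) * (of_real (cos (pi * (Y k - Y j))) + \<i> * of_real (sin (pi * (Y k - Y j)))))
    / (2 * of_real pi * \<i>) ^ m"
proof -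
  define c :: complex where "c = 2 * of_real pi * \<i>"
  have diff: "W j - W k = c * of_real (Y j - Y k)" for j k
    unfolding c_def by (simp add: algebra_simps)
  have node_prod_scaled: "node_prod {0..m} W j = c ^ m * of_real (node_prod {0..m} Y j)" if "j \<in> {0..m}" for j
  proof -
    have "node_prod {0..m} W j = (\<Prod>i\<in>{0..m} - {j}. c * of_real (Y j - Y i))"
      unfolding node_prod_def diff ..
    also have "\<dots> = c ^ card ({0..m} - {j}) * of_real (node_prod {0..m} Y j)"
      by (simp add: prod.distrib node_prod_def)
    finally show ?thesis using that by simp
  qed
  have "(W j - W k) ^ m / (node_prod {0..m} W j * node_prod {0..m} W k) * exp (W k * (1/2) - W j * (1/2))
      = of_real (D j k) * (of_real (cos (pi * (Y k - Y j))) + \<i> * of_real (sin (pi * (Y k - Y j))))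
        / c ^ m"
    if "j \<in> {0..m}" "k \<in> {0..m}" for j k
  proof -
    have "exp (W k * (1/2) - W j * (1/2)) = exp (\<i> * of_real (pi * (Y k - Y j)))"
      by (simp add: algebra_simps)
    also have "\<dots> = of_real (cos (pi * (Y k - Y j))) + \<i> * of_real (sin (pi * (Y k - Y j)))"
      by (simp only: exp_Euler cos_of_real sin_of_real)
    finally have "exp (W k * (1/2) - W j * (1/2))
        = of_real (cos (pi * (Y k - Y j))) + \<i> * of_real (sin (pi * (Y k - Y j)))" .
    moreover have "c \<noteq> 0" unfolding c_def by simp
    moreover have "(W j - W k) ^ m = c ^ m * of_real ((Y j - Y k) ^ m)"
      unfolding diff by (simp add: power_mult_distrib)
    ultimately show ?thesis
      unfolding node_prod_scaled[OF that(1)] node_prod_scaled[OF that(2)] by (simp add: field_simps)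
  qed
  then show ?thesis
    unfolding fourier_closed_form_def c_def[symmetric] sum_divide_distrib by (intro sum.cong refl) auto
qed

lemma fourier_closed_form_half:
  assumes "(even m \<and> trig = cos) \<or> (odd m \<and> trig = sin)"
  shows "fourier_closed_form m W (1/2) (1/2) = of_real ((-1) ^ (m div 2) / (2 * pi) ^ m *
      (\<Sum>j=0..m. \<Sum>k=0..m. D j k * trig (pi * (Y k - Y j))))"
proof -
  define d where "d j k = D j k" for j k
  define \<theta> where "\<theta> j k = pi * (Y k - Y j)" for j k
  define U where "U = (\<Sum>j=0..m. \<Sum>k=0..m. d j k * cos (\<theta> j k))"
  define V where "V = (\<Sum>j=0..m. \<Sum>k=0..m. d j k * sin (\<theta> j k))"
  have "(\<Sum>j=0..m. \<Sum>k=0..m. of_real (d j k) * (of_real (cos (\<theta> j k)) + \<i> * of_real (sin (\<theta> j k))))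
      = of_real U + \<i> * of_real V"
    unfolding U_def V_def by (simp add: distrib_left sum.distrib sum_distrib_left mult.left_commute)
  moreover have "(2 * of_real pi * \<i>) ^ m = of_real ((2 * pi) ^ m) * \<i> ^ m"
    by (simp add: power_mult_distrib)
  ultimately have UV: "fourier_closed_form m W (1/2) (1/2)
      = (of_real U + \<i> * of_real V) / (of_real ((2 * pi) ^ m) * \<i> ^ m)"
    unfolding fourier_closed_form_imaginary_nodes d_def \<theta>_def by simp
  have d_swap: "d k j = (-1) ^ m * d j k" for j k
    unfolding d_def by (simp add: power_minus[of "Y k - Y j", simplified] mult.commute)
  have \<theta>_swap: "\<theta> k j = - \<theta> j k" for j k
    unfolding \<theta>_def by (simp add: algebra_simps)
  have U_swap: "U = (-1) ^ m * U"
    unfolding U_def by (rule double_sum_swap_eq_scale) (subst d_swap, subst \<theta>_swap, simp)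
  have V_swap: "V = - ((-1) ^ m) * V"
    unfolding V_def by (rule double_sum_swap_eq_scale) (subst d_swap, subst \<theta>_swap, simp)
  show ?thesis
  proof (cases "even m")
    case True
    then have "V = 0" using V_swap by simp
    then have "fourier_closed_form m W (1/2) (1/2)
        = of_real U / (of_real ((2 * pi) ^ m) * (-1) ^ (m div 2))"
      using UV True by simp
    also have "\<dots> = of_real ((-1) ^ (m div 2) / (2 * pi) ^ m * U)"
      by (simp add: field_simps)
    finally show ?thesis using True assms unfolding U_def d_def \<theta>_def by simp
  next
    case False
    then have "U = 0" using U_swap by simp
    then have "fourier_closed_form m W (1/2) (1/2)
        = \<i> * of_real V / (of_real ((2 * pi) ^ m) * (\<i> * (-1) ^ (m div 2)))"
      using UV False by (simp add: i_odd_power)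
    also have "\<dots> = of_real ((-1) ^ (m div 2) / (2 * pi) ^ m * V)"
      by (simp add: field_simps)
    finally show ?thesis using False assms unfolding V_def d_def \<theta>_def by simp
  qed
qed

end

lemma double_sum_symmetric:
  fixes \<phi> :: "nat \<Rightarrow> nat \<Rightarrow> 'a::comm_semiring_1"
  assumes sym: "\<And>j k. \<phi> j k = \<phi> k j" and diag: "\<And>j. \<phi> j j = 0"
  shows "(\<Sum>j=0..m. \<Sum>k=0..m. \<phi> j k) = 2 * (\<Sum>j=0..m. \<Sum>k=Suc j..m. \<phi> j k)"
proof (induction m)
  case 0
  then show ?case by (simp add: diag)
next
  case (Suc m)
  have "(\<Sum>j=0..Suc m. \<Sum>k=0..Suc m. \<phi> j k) =
      (\<Sum>j=0..m. \<Sum>k=0..m. \<phi> j k) + (\<Sum>j=0..m. \<phi> j (Suc m)) + (\<Sum>k=0..m. \<phi> (Suc m) k)"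
    by (simp add: sum.distrib diag add_ac)
  moreover have "(\<Sum>j=0..Suc m. \<Sum>k=Suc j..Suc m. \<phi> j k)
      = (\<Sum>j=0..m. (\<Sum>k=Suc j..m. \<phi> j k) + \<phi> j (Suc m))"
  proof -
    have "(\<Sum>j=0..Suc m. \<Sum>k=Suc j..Suc m. \<phi> j k) = (\<Sum>j=0..m. \<Sum>k=Suc j..Suc m. \<phi> j k)"
      by simp
    then show ?thesis by simp
  qed
  moreover have "(\<Sum>k=0..m. \<phi> (Suc m) k) = (\<Sum>j=0..m. \<phi> j (Suc m))"
    using sym by simp
  ultimately show ?case
    unfolding Suc.IH by (simp add: sum.distrib algebra_simps mult_2)
qed

lemma power_int_minus_two: "(x::real) \<noteq> 0 \<Longrightarrow> x powi (int m - 2) = x ^ m / x\<^sup>2"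
  by (simp add: power_int_diff)

definition with_origin :: "(nat \<Rightarrow> real) \<Rightarrow> nat \<Rightarrow> real" where
  "with_origin y i = (if i = 0 then 0 else y i)"

lemma with_origin_simps [simp]:
  "with_origin y 0 = 0" "i \<noteq> 0 \<Longrightarrow> with_origin y i = y i"
  by (simp_all add: with_origin_def)

context
  fixes m :: nat and y :: "nat \<Rightarrow> real"
  assumes nonzero: "\<And>j. j \<in> {1..m} \<Longrightarrow> y j \<noteq> 0"
    and distinct: "\<And>j k. j \<in> {1..m} \<Longrightarrow> k \<in> {1..m} \<Longrightarrow> j \<noteq> k \<Longrightarrow> y j \<noteq> y k"
begin

private abbreviation (input) "Y \<equiv> with_origin y"

lemma inj_on_with_origin: "inj_on Y {0..m}"
proof (rule inj_onI)
  fix i j assume ij: "i \<in> {0..m}" "j \<in> {0..m}" and eq: "Y i = Y j"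
  show "i = j"
  proof (rule ccontr)
    assume "i \<noteq> j"
    then consider "i = 0" "j \<in> {1..m}" | "j = 0" "i \<in> {1..m}" | "i \<in> {1..m}" "j \<in> {1..m}"
      using ij by force
    then show False
      using eq nonzero distinct \<open>i \<noteq> j\<close> by cases (auto simp: with_origin_def)
  qed
qed

lemma origin_term:
  assumes k: "k \<in> {1..m}"
  shows "(Y 0 - Y k) ^ m / (node_prod {0..m} Y 0 * node_prod {0..m} Y k) * trig (pi * (Y k - Y 0))
    = y k powi (int m - 2) * trig (pi * y k) / (\<Prod>i\<in>{1..m} - {k}. (y k - y i) * y i)"
proof -
  define Q where "Q = (\<Prod>i\<in>{1..m} - {k}. y k - y i)"
  define R where "R = (\<Prod>i\<in>{1..m} - {k}. y i)"
  have yk: "y k \<noteq> 0"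
    using nonzero k by auto
  have "node_prod {0..m} Y 0 = (\<Prod>i\<in>{1..m}. - y i)"
    unfolding node_prod_def by (rule prod.reindex_bij_witness[of _ id id]) auto
  also have "\<dots> = (-1) ^ m * (y k * R)"
    using k by (simp add: prod_uminus R_def prod.remove)
  finally have p0: "node_prod {0..m} Y 0 = (-1) ^ m * (y k * R)" .
  have split: "{0..m} - {k} = insert 0 ({1..m} - {k})" using k by auto
  have "node_prod {0..m} Y k = (Y k - Y 0) * (\<Prod>i\<in>{1..m} - {k}. Y k - Y i)"
    unfolding node_prod_def split by simp
  also have "\<dots> = y k * Q"
    using k unfolding Q_def by (intro arg_cong2[where f = "(*)"] prod.cong) auto
  finally have pk: "node_prod {0..m} Y k = y k * Q" .
  have "(Y 0 - Y k) ^ m / (node_prod {0..m} Y 0 * node_prod {0..m} Y k) * trig (pi * (Y k - Y 0))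
      = (-1) ^ m * y k ^ m / ((-1) ^ m * ((y k)\<^sup>2 * (Q * R))) * trig (pi * y k)"
    using k by (simp add: p0 pk power_minus[of "y k"] power2_eq_square mult_ac)
  also have "\<dots> = y k ^ m / (y k)\<^sup>2 * trig (pi * y k) / (Q * R)"
    by simp
  finally show ?thesis
    unfolding power_int_minus_two[OF yk] Q_def R_def prod.distrib .
qed

lemma pair_term:
  assumes j: "j \<in> {1..m}" and k: "k \<in> {Suc j..m}"
  shows "(Y j - Y k) ^ m / (node_prod {0..m} Y j * node_prod {0..m} Y k) * trig (pi * (Y k - Y j))
    = - ((y j - y k) powi (int m - 2) * trig (pi * (y k - y j))
        / (y j * y k * (\<Prod>i\<in>{1..m} - {j, k}. (y j - y i) * (y k - y i))))"
proof -
  define S where "S = {1..m} - {j, k}"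
  define Pj where "Pj = (\<Prod>i\<in>S. y j - y i)"
  define Pk where "Pk = (\<Prod>i\<in>S. y k - y i)"
  have jk: "j \<noteq> 0" "k \<noteq> 0" "j \<noteq> k" "k \<in> {1..m}" using j k by auto
  have d: "y j - y k \<noteq> 0" using distinct j jk by auto
  have split: "{0..m} - {j} = insert 0 (insert k S)" "{0..m} - {k} = insert 0 (insert j S)"
    and S: "finite S" "0 \<notin> S" "j \<notin> S" "k \<notin> S"
    unfolding S_def using j jk by auto
  have on_S: "(\<Prod>i\<in>S. Y l - Y i) = (\<Prod>i\<in>S. y l - y i)" if "l \<noteq> 0" for l
    using that S(2) by (intro prod.cong) (auto simp: with_origin_def)
  have pj: "node_prod {0..m} Y j = y j * ((y j - y k) * Pj)"
    unfolding node_prod_def split(1) Pj_def using S jk on_S[of j] by simp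
  have pk: "node_prod {0..m} Y k = y k * ((y k - y j) * Pk)"
    unfolding node_prod_def split(2) Pk_def using S jk on_S[of k] by simp
  have "y j * ((y j - y k) * Pj) * (y k * ((y k - y j) * Pk))
      = - ((y j - y k)\<^sup>2 * (y j * y k * (Pj * Pk)))"
    by (simp add: power2_eq_square algebra_simps)
  then have "(Y j - Y k) ^ m / (node_prod {0..m} Y j * node_prod {0..m} Y k) * trig (pi * (Y k - Y j))
      = (y j - y k) ^ m / (- ((y j - y k)\<^sup>2 * (y j * y k * (Pj * Pk)))) * trig (pi * (y k - y j))"
    unfolding pj pk using jk by simp
  also have "\<dots> = - ((y j - y k) ^ m / (y j - y k)\<^sup>2 * trig (pi * (y k - y j)) / (y j * y k * (Pj * Pk)))"
    by (simp add: divide_inverse mult_ac)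
  finally show ?thesis
    unfolding power_int_minus_two[OF d] Pj_def Pk_def S_def prod.distrib .
qed

private lemma term_swap:
  assumes trig_minus: "\<And>x. trig (- x) = - \<sigma> * trig x" and sign: "(-1) ^ m * - \<sigma> = 1"
  shows "(Y k - Y j) ^ m / (node_prod {0..m} Y k * node_prod {0..m} Y j) * trig (pi * (Y j - Y k))
    = (Y j - Y k) ^ m / (node_prod {0..m} Y j * node_prod {0..m} Y k) * trig (pi * (Y k - Y j))"
proof -
  have "(Y k - Y j) ^ m = (-1) ^ m * (Y j - Y k) ^ m"
    by (metis minus_diff_eq power_minus)
  moreover have "trig (pi * (Y j - Y k)) = - \<sigma> * trig (pi * (Y k - Y j))"
    using trig_minus[of "pi * (Y k - Y j)"] by (simp add: algebra_simps)
  ultimately have "(Y k - Y j) ^ m / (node_prod {0..m} Y k * node_prod {0..m} Y j)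
        * trig (pi * (Y j - Y k))
      = ((-1) ^ m * - \<sigma>) * ((Y j - Y k) ^ m / (node_prod {0..m} Y j * node_prod {0..m} Y k)
          * trig (pi * (Y k - Y j)))"
    by (simp only: divide_inverse mult_ac)
  then show ?thesis
    unfolding sign by simp
qed

lemma double_sum_with_origin:
  assumes m: "m \<ge> 1" and trig: "(even m \<and> trig = cos \<and> \<sigma> = -1) \<or> (odd m \<and> trig = sin \<and> \<sigma> = 1)"
  shows "(\<Sum>j=0..m. \<Sum>k=0..m.
      (Y j - Y k) ^ m / (node_prod {0..m} Y j * node_prod {0..m} Y k) * trig (pi * (Y k - Y j)))
    = 2 * (\<sigma> * (\<Sum>j=1..m. \<Sum>k=Suc j..m. (y j - y k) powi (int m - 2) * trig (pi * (y j - y k)) /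
              (y j * y k * (\<Prod>i\<in>{1..m} - {j, k}. (y j - y i) * (y k - y i))))
        + (\<Sum>j=1..m. y j powi (int m - 2) * trig (pi * y j) / (\<Prod>i\<in>{1..m} - {j}. (y j - y i) * y i)))"
proof -
  define \<phi> where
    "\<phi> j k = (Y j - Y k) ^ m / (node_prod {0..m} Y j * node_prod {0..m} Y k) * trig (pi * (Y k - Y j))"
    for j k
  have trig_minus: "trig (- x) = - \<sigma> * trig x" for x
    using trig by auto
  have sign: "(-1) ^ m * - \<sigma> = 1"
    using trig by auto
  have "\<phi> j k = \<phi> k j" for j k
    unfolding \<phi>_def by (rule term_swap[where trig = trig, OF trig_minus sign])
  moreover have "\<phi> j j = 0" for j
    unfolding \<phi>_def using m by simp
  ultimately have "(\<Sum>j=0..m. \<Sum>k=0..m. \<phi> j k) = 2 * (\<Sum>j=0..m. \<Sum>k=Suc j..m. \<phi> j k)"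
    by (rule double_sum_symmetric)
  also have "(\<Sum>j=0..m. \<Sum>k=Suc j..m. \<phi> j k) = (\<Sum>k=1..m. \<phi> 0 k) + (\<Sum>j=1..m. \<Sum>k=Suc j..m. \<phi> j k)"
    by (simp add: sum.atLeast_Suc_atMost)
  also have "(\<Sum>k=1..m. \<phi> 0 k)
      = (\<Sum>j=1..m. y j powi (int m - 2) * trig (pi * y j) / (\<Prod>i\<in>{1..m} - {j}. (y j - y i) * y i))"
    unfolding \<phi>_def by (intro sum.cong refl origin_term)
  also have "(\<Sum>j=1..m. \<Sum>k=Suc j..m. \<phi> j k)
      = \<sigma> * (\<Sum>j=1..m. \<Sum>k=Suc j..m. (y j - y k) powi (int m - 2) * trig (pi * (y j - y k)) /
              (y j * y k * (\<Prod>i\<in>{1..m} - {j, k}. (y j - y i) * (y k - y i))))"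
    unfolding sum_distrib_left
  proof (intro sum.cong refl)
    fix j k assume jk: "j \<in> {1..m}" "k \<in> {Suc j..m}"
    have "trig (pi * (y k - y j)) = - \<sigma> * trig (pi * (y j - y k))"
      using trig_minus[of "pi * (y j - y k)"] by (simp add: algebra_simps)
    then show "\<phi> j k = \<sigma> * ((y j - y k) powi (int m - 2) * trig (pi * (y j - y k)) /
        (y j * y k * (\<Prod>i\<in>{1..m} - {j, k}. (y j - y i) * (y k - y i))))"
      unfolding \<phi>_def pair_term[OF jk] by simp
  qed
  finally show ?thesis
    unfolding \<phi>_def by (simp add: add.commute)
qed

end

definition H_region :: "nat \<Rightarrow> real \<Rightarrow> real \<Rightarrow> (nat\<Rightarrow>real) set" where
  "H_region m a b = {x. (\<Sum>i=1..m. \<bar>x i\<bar>) + \<bar>a - b + (\<Sum>i=1..m. x i)\<bar> \<le> a + b}"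

lemma indicator_H_region_measurable:
  "(indicator (H_region m a b) :: _ \<Rightarrow> real) \<in> borel_measurable (PiM {1..m} (\<lambda>_. lborel))"
proof -
  have "(\<lambda>x. \<Sum>i=1..m. (x i::real)) \<in> borel_measurable (PiM {1..m} (\<lambda>_. lborel))" by measurable
  then show ?thesis unfolding H_region_def indicator_def by measurable
qed

lemma H_region_coordinate_bound: "x \<in> H_region m a b \<Longrightarrow> i \<in> {1..m} \<Longrightarrow> \<bar>x i\<bar> \<le> a + b"
proof -
  assume x: "x \<in> H_region m a b" and i: "i \<in> {1..m}"
  have "\<bar>x i\<bar> \<le> (\<Sum>i=1..m. \<bar>x i\<bar>)" using i by (intro member_le_sum) auto
  with x show ?thesis unfolding H_region_def by auto
qed

lemma fourier_integrand_integrable: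
  fixes S :: "(nat \<Rightarrow> real) set" and I :: "nat set" and y :: "nat \<Rightarrow> real" and c :: real
  assumes I: "finite I"
    and S_measurable: "(indicator S :: _ \<Rightarrow> real) \<in> borel_measurable (PiM I (\<lambda>_. lborel))"
    and S_bounded: "\<And>x i. x \<in> S \<Longrightarrow> i \<in> I \<Longrightarrow> \<bar>x i\<bar> \<le> c"
  defines "f \<equiv> \<lambda>x. complex_of_real (indicator S x)
    * exp (- (2 * of_real pi * \<i> * of_real (\<Sum>i\<in>I. x i * y i)))"
  shows "integrable (PiM I (\<lambda>_. lborel)) f"
proof (rule Bochner_Integration.integrable_bound)
  let ?B = "PiE I (\<lambda>_. {-c..c})"
  interpret product_sigma_finite "\<lambda>_::nat. lborel" by standard
  have "emeasure (PiM I (\<lambda>_. lborel)) ?B = (\<Prod>i\<in>I. emeasure lborel {-c..c})"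
    using I by (intro emeasure_PiM) auto
  also have "\<dots> < \<infinity>"
    by (simp add: less_top[symmetric] ennreal_prod_eq_top power_eq_top_ennreal emeasure_lborel_Icc_eq)
  finally show "integrable (PiM I (\<lambda>_. lborel)) (indicator ?B :: _ \<Rightarrow> real)"
    using I by (intro integrable_real_indicator sets_PiM_I_finite) auto
  show "f \<in> borel_measurable (PiM I (\<lambda>_. lborel))"
    unfolding f_def using S_measurable by measurable
  have "norm (f x) \<le> norm (indicator ?B x :: real)" if "x \<in> space (PiM I (\<lambda>_. lborel))" for x
  proof (cases "x \<in> S")
    case True
    then have "x i \<in> {-c..c}" if "i \<in> I" for i
      using S_bounded[OF True that] by (auto simp: abs_le_iff)
    then have "x \<in> ?B"
      using that by (auto simp: space_PiM PiE_def Pi_def)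
    then show ?thesis
      using True by (simp add: f_def norm_mult norm_exp_eq_Re)
  qed (simp add: f_def)
  then show "AE x in PiM I (\<lambda>_. lborel). norm (f x) \<le> norm (indicator ?B x :: real)"
    by (rule AE_I2)
qed

lemma sum_merge_last:
  fixes x z :: "nat \<Rightarrow> real" and g :: "nat \<Rightarrow> real \<Rightarrow> real"
  shows "(\<Sum>i=1..Suc m. g i (merge {Suc m} {1..m} (x, z) i))
    = (\<Sum>i=1..m. g i (z i)) + g (Suc m) (x (Suc m))"
proof -
  have "(\<Sum>i=1..m. g i (merge {Suc m} {1..m} (x, z) i)) = (\<Sum>i=1..m. g i (z i))"
    by (intro sum.cong) (auto simp: merge_def)
  then show ?thesis by (simp add: merge_def)
qed

lemma indicator_H_region_merge:
  "indicator (H_region (Suc m) a b) (merge {Suc m} {1..m} (x, z)) =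
   (indicator (H_region m (a - max 0 (- x (Suc m))) (b - max 0 (x (Suc m)))) z :: real)"
proof -
  have 1: "(\<Sum>i=1..Suc m. \<bar>merge {Suc m} {1..m} (x, z) i\<bar>) = (\<Sum>i=1..m. \<bar>z i\<bar>) + \<bar>x (Suc m)\<bar>"
    using sum_merge_last[of "\<lambda>_. abs"] by simp
  have 2: "(\<Sum>i=1..Suc m. merge {Suc m} {1..m} (x, z) i) = (\<Sum>i=1..m. z i) + x (Suc m)"
    using sum_merge_last[of "\<lambda>_ t. t"] by simp
  show ?thesis unfolding indicator_def H_region_def mem_Collect_eq 1 2
    by (cases "x (Suc m) \<ge> 0") (auto simp: max_def)
qed

lemma fourier_integrand_merge:
  "complex_of_real (indicator (H_region (Suc m) a b) (merge {Suc m} {1..m} (x, z)))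
      * exp (- (2 * of_real pi * \<i> * of_real (\<Sum>i=1..Suc m. merge {Suc m} {1..m} (x, z) i * y i)))
    = complex_of_real (indicator (H_region m (a - max 0 (- x (Suc m))) (b - max 0 (x (Suc m)))) z)
      * exp (- (2 * of_real pi * \<i> * of_real (\<Sum>i=1..m. z i * y i)))
      * exp (- (2 * of_real pi * \<i> * of_real (x (Suc m) * y (Suc m))))"
  unfolding indicator_H_region_merge sum_merge_last[of "\<lambda>i t. t * y i"]
  by (simp add: algebra_simps exp_add[symmetric])

lemma fourier_hat_H_region_Suc_integral:
  fixes m :: nat and y :: "nat \<Rightarrow> real" and a b :: real
  defines "G \<equiv> \<lambda>t. fourier_hat m (indicator (H_region m (a - max 0 (-t)) (b - max 0 t))) y
    * exp (- (2 * of_real pi * \<i> * of_real (t * y (Suc m))))"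
  assumes G_measurable: "G \<in> borel_measurable lborel"
  shows "fourier_hat (Suc m) (indicator (H_region (Suc m) a b)) y = integral\<^sup>L lborel G"
proof -
  interpret product_sigma_finite "\<lambda>_::nat. lborel" by standard
  let ?f = "\<lambda>x. complex_of_real (indicator (H_region (Suc m) a b) x)
    * exp (- (2 * of_real pi * \<i> * of_real (\<Sum>i=1..Suc m. x i * y i)))"
  have split: "{1..Suc m} = {Suc m} \<union> {1..m}" by auto
  have "integrable (PiM {1..Suc m} (\<lambda>_. lborel)) ?f"
    by (rule fourier_integrand_integrable[where c = "a + b", OF _ indicator_H_region_measurable])
      (auto intro: H_region_coordinate_bound)
  then have "fourier_hat (Suc m) (indicator (H_region (Suc m) a b)) y
      = (\<integral>x. (\<integral>z. ?f (merge {Suc m} {1..m} (x, z)) \<partial>PiM {1..m} (\<lambda>_. lborel)) \<partial>PiM {Suc m} (\<lambda>_. lborel))"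
    unfolding fourier_hat_def split by (intro product_integral_fold) auto
  also have "\<dots> = (\<integral>x. G (x (Suc m)) \<partial>PiM {Suc m} (\<lambda>_. lborel))"
    unfolding fourier_integrand_merge G_def fourier_hat_def by (simp add: integral_mult_left_zero)
  also have "\<dots> = integral\<^sup>L lborel G"
    using G_measurable by (intro product_integral_singleton) auto
  finally show ?thesis .
qed

lemma H_region_empty: "a < 0 \<or> b < 0 \<Longrightarrow> H_region m a b = {}"
proof (rule ccontr)
  assume ab: "a < 0 \<or> b < 0" and "H_region m a b \<noteq> {}"
  then obtain x where x: "x \<in> H_region m a b" by auto
  have "\<bar>\<Sum>i=1..m. x i\<bar> \<le> (\<Sum>i=1..m. \<bar>x i\<bar>)" by (rule sum_abs)
  moreover have "\<bar>a - b\<bar> \<le> \<bar>\<Sum>i=1..m. x i\<bar> + \<bar>a - b + (\<Sum>i=1..m. x i)\<bar>" by linarith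
  moreover have "(\<Sum>i=1..m. \<bar>x i\<bar>) + \<bar>a - b + (\<Sum>i=1..m. x i)\<bar> \<le> a + b"
    using x unfolding H_region_def mem_Collect_eq .
  ultimately show False using ab by linarith
qed

lemma fourier_hat_H_region_empty: "a < 0 \<or> b < 0 \<Longrightarrow> fourier_hat m (indicator (H_region m a b)) y = 0"
  by (simp add: H_region_empty fourier_hat_def)

lemma fourier_hat_H_region_0: "a \<ge> 0 \<Longrightarrow> b \<ge> 0 \<Longrightarrow> fourier_hat 0 (indicator (H_region 0 a b)) y = 1"
  by (simp add: fourier_hat_def PiM_empty H_region_def)

lemma integral_exp_double_sum:
  fixes \<alpha> z :: "nat \<Rightarrow> nat \<Rightarrow> complex"
  assumes cd: "c \<le> d" and A: "finite A" and z: "\<And>j k. j \<in> A \<Longrightarrow> k \<in> A \<Longrightarrow> z j k \<noteq> 0"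
  shows "set_integrable lborel {c..d} (\<lambda>t. \<Sum>j\<in>A. \<Sum>k\<in>A. \<alpha> j k * exp (z j k * of_real t))"
    "(LINT t|lborel. indicator {c..d} t *\<^sub>R (\<Sum>j\<in>A. \<Sum>k\<in>A. \<alpha> j k * exp (z j k * of_real t))) =
     (\<Sum>j\<in>A. \<Sum>k\<in>A. \<alpha> j k * (exp (z j k * of_real d) - exp (z j k * of_real c)) / z j k)"
proof -
  have cont: "continuous_on {c..d} (\<lambda>t. \<Sum>j\<in>A. \<Sum>k\<in>A. \<alpha> j k * exp (z j k * of_real t))"
    by (intro continuous_intros)
  then show "set_integrable lborel {c..d} (\<lambda>t. \<Sum>j\<in>A. \<Sum>k\<in>A. \<alpha> j k * exp (z j k * of_real t))"
    by (rule borel_integrable_atLeastAtMost')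
  define F where "F = (\<lambda>u::complex. \<Sum>j\<in>A. \<Sum>k\<in>A. \<alpha> j k / z j k * exp (z j k * u))"
  have dF: "(F has_field_derivative (\<Sum>j\<in>A. \<Sum>k\<in>A. \<alpha> j k * exp (z j k * u))) (at u)" for u
    unfolding F_def using z by (auto intro!: derivative_eq_intros sum.cong)
  have "(LINT t|lborel. indicator {c..d} t *\<^sub>R (\<Sum>j\<in>A. \<Sum>k\<in>A. \<alpha> j k * exp (z j k * of_real t))) =
     F (of_real d) - F (of_real c)"
    using cd cont by (intro integral_FTC_atLeastAtMost[where F="\<lambda>t. F (of_real t)"])
      (auto intro!: has_vector_derivative_real_field dF)
  also have "\<dots> = (\<Sum>j\<in>A. \<Sum>k\<in>A. \<alpha> j k * (exp (z j k * of_real d) - exp (z j k * of_real c)) / z j k)"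
    unfolding F_def by (simp add: sum_subtractf[symmetric] diff_divide_distrib right_diff_distrib)
  finally show "(LINT t|lborel. indicator {c..d} t *\<^sub>R (\<Sum>j\<in>A. \<Sum>k\<in>A. \<alpha> j k * exp (z j k * of_real t))) =
     (\<Sum>j\<in>A. \<Sum>k\<in>A. \<alpha> j k * (exp (z j k * of_real d) - exp (z j k * of_real c)) / z j k)" .
qed

lemma integral_two_sided_exp_sums:
  fixes \<alpha> u v :: "nat \<Rightarrow> nat \<Rightarrow> complex" and c :: complex and a b :: real and A :: "nat set"
  assumes A: "finite A" and a: "a \<ge> 0" and b: "b \<ge> 0"
    and u: "\<And>j k. j \<in> A \<Longrightarrow> k \<in> A \<Longrightarrow> u j k \<noteq> 0" and v: "\<And>j k. j \<in> A \<Longrightarrow> k \<in> A \<Longrightarrow> v j k \<noteq> 0"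
  defines "f \<equiv> \<lambda>t. indicator {0..b} t *\<^sub>R (\<Sum>j\<in>A. \<Sum>k\<in>A. \<alpha> j k * exp (u j k * of_real t))
    + indicator {-a..0} t *\<^sub>R (\<Sum>j\<in>A. \<Sum>k\<in>A. \<alpha> j k * exp (v j k * of_real t)) - indicator {0..0} t *\<^sub>R c"
  shows "integrable lborel f"
    and "integral\<^sup>L lborel f = (\<Sum>j\<in>A. \<Sum>k\<in>A. \<alpha> j k * (exp (u j k * of_real b) - 1) / u j k
      + \<alpha> j k * (1 - exp (- (v j k * of_real a))) / v j k)"
proof -
  note right = integral_exp_double_sum[where \<alpha> = \<alpha>, OF b A u]
    and left = integral_exp_double_sum[where c = "-a" and d = 0 and \<alpha> = \<alpha>, OF _ A v]
  have point: "integrable lborel (\<lambda>t::real. indicator {0..0} t *\<^sub>R c)"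
    by (intro integrable_scaleR_left integrable_real_indicator) (auto simp: emeasure_lborel_Icc_eq)
  show "integrable lborel f"
    unfolding f_def using right(1) left(1) a point by (auto simp: set_integrable_def)
  show "integral\<^sup>L lborel f = (\<Sum>j\<in>A. \<Sum>k\<in>A. \<alpha> j k * (exp (u j k * of_real b) - 1) / u j k
      + \<alpha> j k * (1 - exp (- (v j k * of_real a))) / v j k)"
    unfolding f_def using right left a point by (simp add: set_integrable_def sum.distrib)
qed

text \<open>The first two pieces overlap at \<open>t = 0\<close>, which the last term corrects.\<close>

lemma fourier_hat_H_region_slice:
  assumes closed_form: "\<And>a b. a \<ge> 0 \<Longrightarrow> b \<ge> 0 \<Longrightarrow> fourier_hat m (indicator (H_region m a b)) y = K a b"
    and a: "a \<ge> 0" and b: "b \<ge> 0"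
  shows "fourier_hat m (indicator (H_region m (a - max 0 (-t)) (b - max 0 t))) y
    = indicator {0..b} t *\<^sub>R K a (b - t) + indicator {-a..0} t *\<^sub>R K (a + t) b
      - indicator {0..0} t *\<^sub>R K a b"
proof -
  consider "t = 0" | "0 < t" "t \<le> b" | "b < t" | "-a \<le> t" "t < 0" | "t < -a" by linarith
  then show ?thesis
    by cases (use a b in \<open>auto simp: closed_form fourier_hat_H_region_empty\<close>)
qed

lemma fourier_hat_H_region_Suc:
  fixes C :: "nat \<Rightarrow> nat \<Rightarrow> complex" and W :: "nat \<Rightarrow> complex" and w :: complex
  assumes A: "finite A"
    and closed_form: "\<And>a b. a \<ge> 0 \<Longrightarrow> b \<ge> 0 \<Longrightarrow> fourier_hat m (indicator (H_region m a b)) y =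
          (\<Sum>j\<in>A. \<Sum>k\<in>A. C j k * exp (W k * of_real a - W j * of_real b))"
    and w: "w = 2 * of_real pi * \<i> * of_real (y (Suc m))"
    and ne: "\<And>j. j \<in> A \<Longrightarrow> W j \<noteq> w"
    and a: "a \<ge> 0" and b: "b \<ge> 0"
  shows "fourier_hat (Suc m) (indicator (H_region (Suc m) a b)) y =
    (\<Sum>j\<in>A. \<Sum>k\<in>A. C j k *
      ((exp (W k * of_real a - w * of_real b) - exp (W k * of_real a - W j * of_real b)) / (W j - w)
       + (exp (W k * of_real a - W j * of_real b) - exp (w * of_real a - W j * of_real b)) / (W k - w)))"
proof -
  define K where "K a b = (\<Sum>j\<in>A. \<Sum>k\<in>A. C j k * exp (W k * of_real a - W j * of_real b))" for a b :: real
  define e where "e t = exp (- (w * of_real t))" for t :: real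
  define \<alpha> where "\<alpha> j k = C j k * exp (W k * of_real a - W j * of_real b)" for j k
  define g1 where "g1 t = (\<Sum>j\<in>A. \<Sum>k\<in>A. \<alpha> j k * exp ((W j - w) * of_real t))" for t :: real
  define g2 where "g2 t = (\<Sum>j\<in>A. \<Sum>k\<in>A. \<alpha> j k * exp ((W k - w) * of_real t))" for t :: real
  have slice: "fourier_hat m (indicator (H_region m (a - max 0 (-t)) (b - max 0 t))) y
      = indicator {0..b} t *\<^sub>R K a (b - t) + indicator {-a..0} t *\<^sub>R K (a + t) b
      - indicator {0..0} t *\<^sub>R K a b"
    for t by (rule fourier_hat_H_region_slice) (simp_all add: closed_form K_def a b)
  have g_eq: "K a (b - t) * e t = g1 t" "K (a + t) b * e t = g2 t" for t
    unfolding K_def g1_def g2_def e_def \<alpha>_def sum_distrib_right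
    by (auto intro!: sum.cong simp: mult.assoc exp_add[symmetric] algebra_simps)
  have G: "fourier_hat m (indicator (H_region m (a - max 0 (-t)) (b - max 0 t))) y * e t
      = indicator {0..b} t *\<^sub>R g1 t + indicator {-a..0} t *\<^sub>R g2 t - indicator {0..0} t *\<^sub>R K a b" for t
    unfolding slice using g_eq g_eq[of 0] by (auto simp: indicator_def e_def distrib_right)
  have "exp (- (2 * of_real pi * \<i> * of_real (t * y (Suc m)))) = e t" for t
    unfolding e_def w by (simp add: mult_ac)
  then have slices: "(\<lambda>t. fourier_hat m (indicator (H_region m (a - max 0 (-t)) (b - max 0 t))) y
      * exp (- (2 * of_real pi * \<i> * of_real (t * y (Suc m)))))
    = (\<lambda>t. indicator {0..b} t *\<^sub>R g1 t + indicator {-a..0} t *\<^sub>R g2 t - indicator {0..0} t *\<^sub>R K a b)"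
    using G by simp
  have "W j - w \<noteq> 0" if "j \<in> A" for j
    using ne that by auto
  note integral = integral_two_sided_exp_sums[where u = "\<lambda>j k. W j - w" and v = "\<lambda>j k. W k - w"
      and \<alpha> = \<alpha> and c = "K a b", OF A a b this this, folded g1_def g2_def]
  have "fourier_hat (Suc m) (indicator (H_region (Suc m) a b)) y
      = (\<Sum>j\<in>A. \<Sum>k\<in>A. \<alpha> j k * (exp ((W j - w) * of_real b) - 1) / (W j - w)
          + \<alpha> j k * (1 - exp (- ((W k - w) * of_real a))) / (W k - w))"
    using fourier_hat_H_region_Suc_integral[of m a b y] integral unfolding slices by auto
  also have "\<dots> = (\<Sum>j\<in>A. \<Sum>k\<in>A. C j k *
      ((exp (W k * of_real a - w * of_real b) - exp (W k * of_real a - W j * of_real b)) / (W j - w)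
       + (exp (W k * of_real a - W j * of_real b) - exp (w * of_real a - W j * of_real b)) / (W k - w)))"
    unfolding \<alpha>_def
    by (intro sum.cong refl)
      (simp add: right_diff_distrib diff_divide_distrib add_divide_distrib distrib_left mult.assoc
        exp_add[symmetric] algebra_simps)
  finally show ?thesis .
qed

lemma fourier_hat_H_region_eq_fourier_closed_form:
  assumes inj: "inj_on (with_origin y) {0..m}" and "a \<ge> 0" "b \<ge> 0"
  shows "fourier_hat m (indicator (H_region m a b)) y
    = fourier_closed_form m (\<lambda>i. 2 * of_real pi * \<i> * of_real (with_origin y i)) a b"
  using assms
proof (induction m arbitrary: a b)
  case 0
  then show ?case by (simp add: fourier_hat_H_region_0 fourier_closed_form_def node_prod_def)
next
  case (Suc m)
  define W where "W = (\<lambda>i. 2 * of_real pi * \<i> * complex_of_real (with_origin y i))"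
  have inj_W: "inj_on W {0..Suc m}"
    using Suc.prems(1) unfolding W_def by (auto simp: inj_on_def)
  have "inj_on (with_origin y) {0..m}"
    using Suc.prems(1) by (rule inj_on_subset) auto
  then have closed_form: "fourier_hat m (indicator (H_region m a b)) y = (\<Sum>j\<in>{0..m}. \<Sum>k\<in>{0..m}.
      (W j - W k) ^ m / (node_prod {0..m} W j * node_prod {0..m} W k)
        * exp (W k * of_real a - W j * of_real b))"
    if "a \<ge> 0" "b \<ge> 0" for a b
    using Suc.IH that unfolding fourier_closed_form_def W_def by blast
  have ne: "W j \<noteq> W (Suc m)" if "j \<in> {0..m}" for j
    using inj_onD[OF inj_W, of j "Suc m"] that by auto
  show ?case
    unfolding W_def[symmetric] fourier_closed_form_Suc[OF inj_W]
    by (rule fourier_hat_H_region_Suc) (use closed_form ne Suc.prems in \<open>auto simp: W_def\<close>)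
qed

lemma fourier_hat_H_set:
  fixes y :: "nat \<Rightarrow> real"
  assumes m: "m \<ge> 1"
    and nonzero: "\<And>j. j \<in> {1..m} \<Longrightarrow> y j \<noteq> 0"
    and distinct: "\<And>j k. j \<in> {1..m} \<Longrightarrow> k \<in> {1..m} \<Longrightarrow> j \<noteq> k \<Longrightarrow> y j \<noteq> y k"
    and trig: "(even m \<and> trig = cos \<and> \<sigma> = -1) \<or> (odd m \<and> trig = sin \<and> \<sigma> = 1)"
  shows "fourier_hat m (indicator (H_set m)) y = of_real ((-1) ^ (m div 2) / (2 ^ (m - 1) * pi ^ m) *
    (\<sigma> * (\<Sum>j=1..m. \<Sum>k=Suc j..m. (y j - y k) powi (int m - 2) * trig (pi * (y j - y k)) /
              (y j * y k * (\<Prod>i\<in>{1..m} - {j, k}. (y j - y i) * (y k - y i))))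
      + (\<Sum>j=1..m. y j powi (int m - 2) * trig (pi * y j) / (\<Prod>i\<in>{1..m} - {j}. (y j - y i) * y i))))"
proof -
  have "inj_on (with_origin y) {0..m}"
    using nonzero distinct by (rule inj_on_with_origin)
  moreover have "H_set m = H_region m (1/2) (1/2)"
    unfolding H_set_def H_region_def by simp
  ultimately have "fourier_hat m (indicator (H_set m)) y
      = fourier_closed_form m (\<lambda>i. 2 * of_real pi * \<i> * of_real (with_origin y i)) (1/2) (1/2)"
    by (simp add: fourier_hat_H_region_eq_fourier_closed_form)
  also have "\<dots> = of_real ((-1) ^ (m div 2) / (2 * pi) ^ m * (\<Sum>j=0..m. \<Sum>k=0..m.
      (with_origin y j - with_origin y k) ^ m
        / (node_prod {0..m} (with_origin y) j * node_prod {0..m} (with_origin y) k)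
        * trig (pi * (with_origin y k - with_origin y j))))"
    by (rule fourier_closed_form_half) (use trig in auto)
  also have "(\<Sum>j=0..m. \<Sum>k=0..m. (with_origin y j - with_origin y k) ^ m
        / (node_prod {0..m} (with_origin y) j * node_prod {0..m} (with_origin y) k)
        * trig (pi * (with_origin y k - with_origin y j)))
    = 2 * (\<sigma> * (\<Sum>j=1..m. \<Sum>k=Suc j..m. (y j - y k) powi (int m - 2) * trig (pi * (y j - y k)) /
              (y j * y k * (\<Prod>i\<in>{1..m} - {j, k}. (y j - y i) * (y k - y i))))
      + (\<Sum>j=1..m. y j powi (int m - 2) * trig (pi * y j) / (\<Prod>i\<in>{1..m} - {j}. (y j - y i) * y i)))"
    using nonzero distinct m trig by (rule double_sum_with_origin)
  also have "(-1) ^ (m div 2) / (2 * pi) ^ m * (2 * x) = (-1) ^ (m div 2) / (2 ^ (m - 1) * pi ^ m) * x"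
    for x
    using m by (cases m) (simp_all add: power_mult_distrib)
  finally show ?thesis .
qed

theorem mainTheorem10:
  fixes n :: nat and y :: "nat \<Rightarrow> real"
  assumes "n \<ge> 2"
    and "\<forall>j\<in>{1..n-1}. y j \<noteq> 0"
    and "\<forall>j\<in>{1..n-1}. \<forall>k\<in>{1..n-1}. j \<noteq> k \<longrightarrow> y j \<noteq> y k"
  shows "fourier_hat (n-1) (indicator (H_set (n-1))) y =
    complex_of_real
     (if odd n then
        (-1) ^ ((n-1) div 2) / (2 ^ (n-2) * pi ^ (n-1)) *
        ( - (\<Sum>j=1..n-1. \<Sum>k=j+1..n-1.
               (y j - y k) powi (int n - 3) * cos (pi * (y j - y k)) /
               (y j * y k * (\<Prod>i\<in>{1..n-1} - {j,k}. (y j - y i) * (y k - y i))))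
          + (\<Sum>j=1..n-1. (y j) powi (int n - 3) * cos (pi * y j) /
               (\<Prod>i\<in>{1..n-1} - {j}. (y j - y i) * y i)))
      else
        (-1) ^ (n div 2 - 1) / (2 ^ (n-2) * pi ^ (n-1)) *
        ( (\<Sum>j=1..n-1. \<Sum>k=j+1..n-1.
               (y j - y k) powi (int n - 3) * sin (pi * (y j - y k)) /
               (y j * y k * (\<Prod>i\<in>{1..n-1} - {j,k}. (y j - y i) * (y k - y i))))
          + (\<Sum>j=1..n-1. (y j) powi (int n - 3) * sin (pi * y j) /
               (\<Prod>i\<in>{1..n-1} - {j}. (y j - y i) * y i))))"
proof -
  obtain m where n: "n = Suc m" and m: "m \<ge> 1"
    using assms(1) by (metis Suc_le_D Suc_le_mono one_add_one plus_1_eq_Suc)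
  have nonzero: "\<And>j. j \<in> {1..m} \<Longrightarrow> y j \<noteq> 0" and
    distinct: "\<And>j k. j \<in> {1..m} \<Longrightarrow> k \<in> {1..m} \<Longrightarrow> j \<noteq> k \<Longrightarrow> y j \<noteq> y k"
    using assms(2,3) n by auto
  have indices: "n - 1 = m" "n - 2 = m - 1" "int n - 3 = int m - 2" "\<And>j. j + 1 = Suc j"
    using n by auto
  show ?thesis
  proof (cases "even m")
    case True
    then have "odd n" "(n - 1) div 2 = m div 2" using n by auto
    then show ?thesis
      using fourier_hat_H_set[where y = y and trig = cos and \<sigma> = "-1", OF m nonzero distinct] True
      unfolding indices by simp
  next
    case False
    then have "even n" "n div 2 - 1 = m div 2" using n by auto
    then show ?thesis
      using fourier_hat_H_set[where y = y and trig = sin and \<sigma> = 1, OF m nonzero distinct] False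
      unfolding indices by simp
  qed
qed

end
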